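(* Let $\gamma\in\mathbf{Sp}(2n,\mathbb R)$ with $\gamma\tau(\gamma)=I$. Then there exists $h\in\mathbf{Sp}(2n,\mathbb R)$ with $\gamma=\tau(h)h^{-1}$ if and only if $\mathfrak h_n^\gamma\neq\emptyset$.
   Context: $\mathbf{Sp}(2n,\mathbb R)$: real matrices $g=\begin{pmatrix}A&B\\C&D\end{pmatrix}$ with ${}^tgJg=J$, $J=\begin{pmatrix}0&I\\-I&0\end{pmatrix}$, acting on $\mathfrak h_n=\{Z\in M_n(\mathbb C):{}^tZ=Z,\mathrm{Im}Z>0\}$ by $gZ=(AZ+B)(CZ+D)^{-1}$. $\tau\begin{pmatrix}A&B\\C&D\end{pmatrix}=\begin{pmatrix}A&-B\\-C&D\end{pmatrix}$ and $\tau(Z)=-\overline Z$; $\mathfrak h_n^\gamma=\{Z\in\mathfrak h_n:\gamma Z=\tau(Z)\}$. *)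

theory Defs
  imports "HOL-Analysis.Analysis"
begin

text \<open>Real 2n x 2n matrices are indexed by the type 'n + 'n: Inl i is the i-th index of the
first block, Inr i the i-th index of the second block (n = CARD('n)).\<close>

type_synonym 'n rmat2 = "real ^ ('n + 'n) ^ ('n + 'n)"

definition blkA :: "'n::finite rmat2 \<Rightarrow> real^'n^'n" where
  "blkA g = (\<chi> i j. g $ Inl i $ Inl j)"
definition blkB :: "'n::finite rmat2 \<Rightarrow> real^'n^'n" where
  "blkB g = (\<chi> i j. g $ Inl i $ Inr j)"
definition blkC :: "'n::finite rmat2 \<Rightarrow> real^'n^'n" where
  "blkC g = (\<chi> i j. g $ Inr i $ Inl j)"
definition blkD :: "'n::finite rmat2 \<Rightarrow> real^'n^'n" where
  "blkD g = (\<chi> i j. g $ Inr i $ Inr j)"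

definition Jmat :: "'n::finite rmat2" where
  "Jmat = (\<chi> i j. case (i, j) of
       (Inl a, Inr b) \<Rightarrow> (if a = b then 1 else 0)
     | (Inr a, Inl b) \<Rightarrow> (if a = b then -1 else 0)
     | _ \<Rightarrow> 0)"

definition Sp :: "'n::finite rmat2 set" where
  "Sp = {g. transpose g ** Jmat ** g = Jmat}"

definition tauM :: "'n::finite rmat2 \<Rightarrow> 'n rmat2" where
  "tauM g = (\<chi> i j. case (i, j) of
       (Inl a, Inl b) \<Rightarrow> g $ i $ j
     | (Inr a, Inr b) \<Rightarrow> g $ i $ j
     | _ \<Rightarrow> - (g $ i $ j))"

definition cmat :: "real^'n^'m \<Rightarrow> complex^'n^'m" where
  "cmat M = (\<chi> i j. complex_of_real (M $ i $ j))"

definition ImM :: "complex^'n^'m \<Rightarrow> real^'n^'m" where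
  "ImM Z = (\<chi> i j. Im (Z $ i $ j))"

definition pos_def :: "real^'n^'n \<Rightarrow> bool" where
  "pos_def M \<longleftrightarrow> (\<forall>x. x \<noteq> 0 \<longrightarrow> x \<bullet> (M *v x) > 0)"

definition siegel :: "(complex^'n^'n) set" where
  "siegel = {Z. transpose Z = Z \<and> pos_def (ImM Z)}"

definition act :: "'n::finite rmat2 \<Rightarrow> complex^'n^'n \<Rightarrow> complex^'n^'n" where
  "act g Z = (cmat (blkA g) ** Z + cmat (blkB g)) ** matrix_inv (cmat (blkC g) ** Z + cmat (blkD g))"

definition tauZ :: "complex^'n^'n \<Rightarrow> complex^'n^'n" where
  "tauZ Z = (\<chi> i j. - cnj (Z $ i $ j))"

definition siegel_fix :: "'n::finite rmat2 \<Rightarrow> (complex^'n^'n) set" where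
  "siegel_fix \<gamma> = {Z \<in> siegel. act \<gamma> Z = tauZ Z}"

end

theory Submission
  imports Defs "HOL-Library.Cardinality"
begin

text \<open>
  With \<open>S = diag(I, -I)\<close> we have \<open>\<tau>(g) = S g S\<close>, so the hypotheses say exactly that
  \<open>\<sigma> = S \<gamma>\<close> is an anti-symplectic involution: \<open>\<sigma>\<^sup>2 = I\<close> and \<open>\<sigma>\<^sup>T J \<sigma> = -J\<close>.
  Its eigenspaces for \<open>1\<close> and \<open>-1\<close> are complementary isotropic subspaces, hence both
  Lagrangian of dimension \<open>n\<close>, as are those of \<open>S\<close>. Matching the eigenspaces gives an
  invertible \<open>h\<^sub>1\<close> with \<open>h\<^sub>1 S = \<sigma> h\<^sub>1\<close>; the form \<open>h\<^sub>1\<^sup>T J h\<^sub>1\<close> is then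
  block anti-diagonal, and a block-diagonal correction commuting with \<open>S\<close> makes \<open>h\<^sub>1\<close>
  symplectic. For the resulting \<open>h\<close>, \<open>\<tau>(h) = S h S = \<gamma> h\<close>. So over the reals the
  left-hand side always holds.

  Conversely, write \<open>h [iI; I] = [P; Q]\<close>. The symplectic relations give
  \<open>P\<^sup>T Q = Q\<^sup>T P\<close> and \<open>Q\<^sup>* P - P\<^sup>* Q = 2iI\<close>, which make \<open>Q\<close> invertible and
  \<open>Z = h(iI) = P Q\<^sup>-\<^sup>1\<close> symmetric with positive definite imaginary part. Since
  \<open>\<tau>(iI) = iI\<close>, we get \<open>\<gamma> Z = \<tau>(h)(iI) = \<tau>(Z)\<close>.
\<close>

lemma invertible_matrix_inv:
  fixes A :: "'a::semiring_1^'n^'m"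
  assumes "invertible A"
  shows matrix_inv_right: "A ** matrix_inv A = mat 1"
    and matrix_inv_left: "matrix_inv A ** A = mat 1"
proof -
  from assms obtain A' where "A ** A' = mat 1 \<and> A' ** A = mat 1"
    unfolding invertible_def by blast
  then have "A ** matrix_inv A = mat 1 \<and> matrix_inv A ** A = mat 1"
    unfolding matrix_inv_def by (rule someI)
  then show "A ** matrix_inv A = mat 1" "matrix_inv A ** A = mat 1" by auto
qed

lemma matrix_mul_left_cancel:
  fixes A :: "'a::semiring_1^'n^'n"
  assumes "invertible A"
  shows "A ** X = A ** Y \<longleftrightarrow> X = Y"
  by (metis assms matrix_inv_left matrix_mul_assoc matrix_mul_lid)

lemma matrix_mul_right_cancel:
  fixes A :: "'a::semiring_1^'n^'n"
  assumes "invertible A"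
  shows "X ** A = Y ** A \<longleftrightarrow> X = Y"
  by (metis assms matrix_inv_right matrix_mul_assoc matrix_mul_rid)

lemma invertible_transpose:
  fixes A :: "'a::comm_semiring_1^'n^'n"
  assumes "invertible A"
  shows "invertible (transpose A)"
  using assms unfolding invertible_def by (metis matrix_transpose_mul transpose_mat)

lemma invertible_if_trivial_kernel:
  fixes A :: "'a::field^'n^'n"
  assumes "\<And>x. A *v x = 0 \<Longrightarrow> x = 0"
  shows "invertible A"
proof -
  have "inj ((*v) A)"
    by (rule injI) (metis assms eq_iff_diff_eq_0 matrix_vector_mult_diff_distrib)
  then show ?thesis
    using vec.linear_inj_imp_surj[OF matrix_vector_mul_linear_gen]
    by (simp add: invertible_eq_bij bij_def)
qed

lemma matrix_mul_lneg: "(- A) ** B = - (A ** (B::'a::ring_1^_^_))"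
  by (vector matrix_matrix_mult_def sum_negf)

lemma matrix_mul_rneg: "A ** (- B) = - (A ** (B::'a::ring_1^_^_))"
  by (vector matrix_matrix_mult_def sum_negf)

lemma matrix_vector_mult_lneg: "(- A) *v x = - (A *v (x::'a::ring_1^_))"
  by (vector matrix_vector_mult_def sum_negf)

lemma matrix_vector_mult_rneg: "A *v (- x) = - (A *v (x::'a::ring_1^_))"
  by (vector matrix_vector_mult_def sum_negf)

lemma transpose_uminus: "transpose (- A) = - transpose A"
  by (vector transpose_def)

lemma transpose_zero [simp]: "transpose 0 = 0"
  by (vector transpose_def)

lemma mat_uminus: "mat (- c) = - mat (c::'a::ab_group_add)"
  by (vector mat_def)

lemma mat_diff: "mat a - mat b = mat (a - b :: 'a::ab_group_add)"
  by (simp add: vec_eq_iff mat_def)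

lemma sum_UNIV_sum_type:
  "(\<Sum>r\<in>UNIV. f r) = (\<Sum>a\<in>UNIV. f (Inl a)) + (\<Sum>b\<in>UNIV. f (Inr b))"
  for f :: "'a::finite + 'b::finite \<Rightarrow> 'c::comm_monoid_add"
proof -
  have "(\<Sum>r\<in>UNIV. f r) = (\<Sum>r\<in>UNIV <+> UNIV. f r)"
    by simp
  also have "\<dots> = (\<Sum>a\<in>UNIV. f (Inl a)) + (\<Sum>b\<in>UNIV. f (Inr b))"
    by (subst sum.Plus) (auto simp: comp_def)
  finally show ?thesis .
qed

section \<open>Block matrices\<close>

definition block_mat :: "'a^'n^'n \<Rightarrow> 'a^'n^'n \<Rightarrow> 'a^'n^'n \<Rightarrow> 'a^'n^'n \<Rightarrow> 'a^('n+'n)^('n+'n)"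
  where "block_mat A B C D = (\<chi> r s. case r of
      Inl i \<Rightarrow> (case s of Inl j \<Rightarrow> A$i$j | Inr j \<Rightarrow> B$i$j)
    | Inr i \<Rightarrow> (case s of Inl j \<Rightarrow> C$i$j | Inr j \<Rightarrow> D$i$j))"

definition vstack :: "'a^'m^'n \<Rightarrow> 'a^'m^'n \<Rightarrow> 'a^'m^('n+'n)"
  where "vstack T U = (\<chi> r j. case r of Inl i \<Rightarrow> T$i$j | Inr i \<Rightarrow> U$i$j)"

lemma block_mat_nth [simp]:
  "block_mat A B C D $ Inl i $ Inl j = A$i$j" "block_mat A B C D $ Inl i $ Inr j = B$i$j"
  "block_mat A B C D $ Inr i $ Inl j = C$i$j" "block_mat A B C D $ Inr i $ Inr j = D$i$j"
  by (simp_all add: block_mat_def)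

lemma vstack_nth [simp]: "vstack T U $ Inl i $ j = T$i$j" "vstack T U $ Inr i $ j = U$i$j"
  by (simp_all add: vstack_def)

lemma block_mat_blocks: "block_mat (blkA g) (blkB g) (blkC g) (blkD g) = g"
  by (simp add: vec_eq_iff block_mat_def blkA_def blkB_def blkC_def blkD_def split: sum.split)

lemma block_mat_eq_iff:
  "block_mat A B C D = block_mat A' B' C' D' \<longleftrightarrow> A = A' \<and> B = B' \<and> C = C' \<and> D = D'"
proof
  assume eq: "block_mat A B C D = block_mat A' B' C' D'"
  have "A$i$j = A'$i$j \<and> B$i$j = B'$i$j \<and> C$i$j = C'$i$j \<and> D$i$j = D'$i$j" for i j
    using arg_cong[OF eq, of "\<lambda>M. M $ Inl i $ Inl j"] arg_cong[OF eq, of "\<lambda>M. M $ Inl i $ Inr j"]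
      arg_cong[OF eq, of "\<lambda>M. M $ Inr i $ Inl j"] arg_cong[OF eq, of "\<lambda>M. M $ Inr i $ Inr j"]
    by simp
  then show "A = A' \<and> B = B' \<and> C = C' \<and> D = D'"
    by (simp add: vec_eq_iff)
qed simp

lemma block_mat_mult:
  fixes A :: "'a::semiring_1^'n::finite^'n"
  shows "block_mat A B C D ** block_mat A' B' C' D'
    = block_mat (A ** A' + B ** C') (A ** B' + B ** D') (C ** A' + D ** C') (C ** B' + D ** D')"
  by (simp add: vec_eq_iff matrix_matrix_mult_def sum_UNIV_sum_type block_mat_def split: sum.split)

lemma transpose_block_mat:
  "transpose (block_mat A B C D) = block_mat (transpose A) (transpose C) (transpose B) (transpose D)"
  by (simp add: vec_eq_iff transpose_def block_mat_def split: sum.split)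

lemma uminus_block_mat: "- block_mat A B C D = block_mat (- A) (- B) (- C) (- D)"
  by (simp add: vec_eq_iff block_mat_def split: sum.split)

lemma mat_eq_block_mat: "mat c = block_mat (mat c) 0 0 (mat c)"
  by (simp add: vec_eq_iff block_mat_def mat_def split: sum.split)

lemma vstack_cases: "\<exists>T U. X = vstack T U"
  by (rule exI[of _ "\<chi> i j. X $ Inl i $ j"], rule exI[of _ "\<chi> i j. X $ Inr i $ j"])
    (simp add: vec_eq_iff vstack_def split: sum.split)

lemma vstack_eq_iff: "vstack T U = vstack T' U' \<longleftrightarrow> T = T' \<and> U = U'"
proof
  assume eq: "vstack T U = vstack T' U'"
  have "T$i$j = T'$i$j \<and> U$i$j = U'$i$j" for i j
    using arg_cong[OF eq, of "\<lambda>M. M $ Inl i $ j"] arg_cong[OF eq, of "\<lambda>M. M $ Inr i $ j"]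
    by simp
  then show "T = T' \<and> U = U'"
    by (simp add: vec_eq_iff)
qed simp

lemma block_mat_mult_vstack:
  fixes A :: "'a::semiring_1^'n::finite^'n"
  shows "block_mat A B C D ** vstack T U = vstack (A ** T + B ** U) (C ** T + D ** U)"
  by (simp add: vec_eq_iff matrix_matrix_mult_def sum_UNIV_sum_type block_mat_def vstack_def
      split: sum.split)

lemma vstack_mult: "vstack T U ** X = vstack (T ** X) (U ** X)"
  by (simp add: vec_eq_iff matrix_matrix_mult_def vstack_def split: sum.split)

lemma transpose_vstack_mult_vstack:
  fixes T :: "'a::comm_semiring_1^'m^'n::finite"
  shows "transpose (vstack T U) ** vstack T' U' = transpose T ** T' + transpose U ** U'"
  by (simp add: vec_eq_iff matrix_matrix_mult_def sum_UNIV_sum_type vstack_def transpose_def)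

lemma uminus_vstack: "- vstack T U = vstack (- T) (- U)"
  by (simp add: vec_eq_iff vstack_def split: sum.split)

section \<open>Anti-symplectic involutions\<close>

lemma Jmat_block: "Jmat = block_mat 0 (mat 1) (- mat 1) 0"
  by (simp add: vec_eq_iff block_mat_def Jmat_def mat_def split: sum.split)

lemma Jmat_squared: "Jmat ** Jmat = - (mat 1 :: 'n::finite rmat2)"
proof -
  have "Jmat ** Jmat = block_mat (- mat 1) 0 0 (- mat 1 :: real^'n^'n)"
    by (simp add: Jmat_block block_mat_mult matrix_mul_lneg matrix_mul_rneg)
  then show ?thesis
    by (subst mat_eq_block_mat) (simp add: uminus_block_mat)
qed

lemma transpose_Jmat: "transpose Jmat = - (Jmat :: 'n::finite rmat2)"
  by (simp add: Jmat_block transpose_block_mat transpose_uminus uminus_block_mat)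

lemma invertible_Jmat: "invertible (Jmat :: 'n::finite rmat2)"
  unfolding invertible_def
  by (rule exI[of _ "- Jmat"]) (simp add: matrix_mul_rneg matrix_mul_lneg Jmat_squared)

lemma Sp_invertible:
  assumes "h \<in> Sp"
  shows "invertible h"
proof -
  have "(- Jmat ** transpose h ** Jmat) ** h = - Jmat ** (transpose h ** Jmat ** h)"
    by (simp add: matrix_mul_assoc)
  also have "\<dots> = mat 1"
    using assms by (simp add: Sp_def matrix_mul_lneg Jmat_squared)
  finally show ?thesis
    using invertible_left_inverse by blast
qed

definition Smat :: "'n::finite rmat2" where
  "Smat = block_mat (mat 1) 0 0 (- mat 1)"

lemma tauM_block:
  fixes g :: "'n::finite rmat2"
  shows "tauM g = block_mat (blkA g) (- blkB g) (- blkC g) (blkD g)"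
  unfolding vec_eq_iff
proof (intro allI)
  fix r s :: "'n + 'n"
  show "tauM g $ r $ s = block_mat (blkA g) (- blkB g) (- blkC g) (blkD g) $ r $ s"
    by (cases r; cases s) (simp_all add: tauM_def blkA_def blkB_def blkC_def blkD_def)
qed

lemma tauM_eq_Smat_conj:
  fixes g :: "'n::finite rmat2"
  shows "tauM g = Smat ** g ** Smat"
proof -
  have "tauM g = Smat ** block_mat (blkA g) (blkB g) (blkC g) (blkD g) ** Smat"
    by (simp add: tauM_block Smat_def block_mat_mult matrix_mul_lneg matrix_mul_rneg)
  then show ?thesis
    by (simp only: block_mat_blocks)
qed

definition antisymplectic_involution :: "'n::finite rmat2 \<Rightarrow> bool" where
  "antisymplectic_involution s \<longleftrightarrow> s ** s = mat 1 \<and> transpose s ** Jmat ** s = - Jmat"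

lemma transpose_Smat: "transpose Smat = Smat"
  by (simp add: Smat_def transpose_block_mat transpose_uminus)

lemma antisymplectic_involution_Smat: "antisymplectic_involution (Smat :: 'n::finite rmat2)"
proof -
  have "Smat ** Smat = block_mat (mat 1) 0 0 (mat 1 :: real^'n^'n)"
    by (simp add: Smat_def block_mat_mult matrix_mul_lneg matrix_mul_rneg)
  moreover have "transpose Smat ** Jmat ** Smat = block_mat 0 (- mat 1) (mat 1) (0 :: real^'n^'n)"
    by (simp add: Smat_def Jmat_block block_mat_mult transpose_block_mat transpose_uminus
        matrix_mul_lneg matrix_mul_rneg)
  ultimately show ?thesis
    by (simp add: antisymplectic_involution_def Jmat_block uminus_block_mat
        flip: mat_eq_block_mat)
qed

lemma antisymplectic_involution_uminus:
  "antisymplectic_involution s \<Longrightarrow> antisymplectic_involution (- s)"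
  by (simp add: antisymplectic_involution_def matrix_mul_lneg matrix_mul_rneg transpose_uminus)

lemma antisymplectic_involution_Smat_mult:
  fixes \<gamma> :: "'n::finite rmat2"
  assumes "\<gamma> \<in> Sp" and "\<gamma> ** tauM \<gamma> = mat 1"
  shows "antisymplectic_involution (Smat ** \<gamma>)"
  unfolding antisymplectic_involution_def
proof
  have "tauM \<gamma> ** \<gamma> = mat 1"
    using assms(2) matrix_left_right_inverse by blast
  then show "Smat ** \<gamma> ** (Smat ** \<gamma>) = mat 1"
    by (simp add: tauM_eq_Smat_conj matrix_mul_assoc)
  have "transpose (Smat ** \<gamma>) ** Jmat ** (Smat ** \<gamma>)
      = transpose \<gamma> ** (transpose Smat ** Jmat ** Smat) ** \<gamma>"
    by (simp add: matrix_transpose_mul matrix_mul_assoc)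
  also have "\<dots> = - Jmat"
    using assms(1) antisymplectic_involution_Smat[where 'n = 'n]
    unfolding antisymplectic_involution_def Sp_def by (simp add: matrix_mul_lneg matrix_mul_rneg)
  finally show "transpose (Smat ** \<gamma>) ** Jmat ** (Smat ** \<gamma>) = - Jmat" .
qed

lemma isotropic_subspace_dim_le:
  fixes L :: "(real^('n::finite + 'n)) set"
  assumes "subspace L"
    and "\<And>x y. x \<in> L \<Longrightarrow> y \<in> L \<Longrightarrow> x \<bullet> (Jmat *v y) = 0"
  shows "dim L \<le> CARD('n)"
proof -
  have "inj ((*v) (Jmat :: 'n rmat2))"
    using invertible_Jmat[where 'n = 'n] by (simp add: invertible_eq_bij bij_def)
  then have "dim ((*v) Jmat ` L) = dim L"
    by (intro dim_image_eq) (auto intro: inj_on_subset)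
  moreover have "dim (L \<union> (*v) Jmat ` L) = dim L + dim ((*v) Jmat ` L)"
    by (rule dim_orthogonal_sum) (auto simp: assms(2))
  moreover have "dim (L \<union> (*v) Jmat ` L) \<le> CARD('n + 'n)"
    by (rule dim_subset_UNIV_cart)
  ultimately show ?thesis by simp
qed

lemma subspace_fixed_vectors: "subspace {x. A *v x = x}"
  for A :: "real^'m^'m"
  by (auto simp: subspace_def matrix_vector_right_distrib matrix_vector_mult_scaleR)

lemma involution_eigen_parts:
  fixes s :: "real^'m^'m"
  assumes "s ** s = mat 1"
  shows "s *v ((1/2) *\<^sub>R (x + s *v x)) = (1/2) *\<^sub>R (x + s *v x)"
    and "(- s) *v ((1/2) *\<^sub>R (x - s *v x)) = (1/2) *\<^sub>R (x - s *v x)"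
    and "(1/2) *\<^sub>R (x + s *v x) + (1/2) *\<^sub>R (x - s *v x) = x"
proof -
  have ssx: "s *v (s *v x) = x"
    using assms by (simp add: matrix_vector_mul_assoc)
  show "s *v ((1/2) *\<^sub>R (x + s *v x)) = (1/2) *\<^sub>R (x + s *v x)"
    by (simp add: matrix_vector_mult_scaleR matrix_vector_right_distrib ssx add.commute)
  show "(- s) *v ((1/2) *\<^sub>R (x - s *v x)) = (1/2) *\<^sub>R (x - s *v x)"
    by (simp add: matrix_vector_mult_lneg matrix_vector_mult_scaleR
        matrix_vector_mult_diff_distrib ssx flip: scaleR_minus_right)
  show "(1/2) *\<^sub>R (x + s *v x) + (1/2) *\<^sub>R (x - s *v x) = x"
    by (simp add: vec_eq_iff field_simps)
qed

lemma antisymplectic_involution_fixed_dim: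
  fixes s :: "'n::finite rmat2"
  assumes "antisymplectic_involution s"
  shows "dim {x. s *v x = x} = CARD('n)"
proof -
  let ?L1 = "{x. s *v x = x}" and ?L2 = "{x. (- s) *v x = x}"
  have form: "(A *v x) \<bullet> (Jmat *v (A *v y)) = - (x \<bullet> (Jmat *v y))"
    if "antisymplectic_involution A" for A :: "'n rmat2" and x y :: "real^('n + 'n)"
  proof -
    have "(A *v x) \<bullet> z = x \<bullet> (transpose A *v z)" for z
      by (metis dot_lmul_matrix transpose_matrix_vector transpose_transpose)
    then have "(A *v x) \<bullet> (Jmat *v (A *v y)) = x \<bullet> ((transpose A ** Jmat ** A) *v y)"
      by (simp add: matrix_vector_mul_assoc matrix_mul_assoc del: transpose_matrix_vector)
    also have "\<dots> = - (x \<bullet> (Jmat *v y))"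
      using that by (simp add: antisymplectic_involution_def matrix_vector_mult_lneg)
    finally show ?thesis .
  qed
  have isotropic: "x \<bullet> (Jmat *v y) = 0"
    if "antisymplectic_involution A" "A *v x = x" "A *v y = y" for A :: "'n rmat2" and x y :: "real^('n + 'n)"
    using form[OF that(1), of x y] that(2,3) by simp
  have dim1: "dim ?L1 \<le> CARD('n)"
    using assms by (intro isotropic_subspace_dim_le subspace_fixed_vectors) (auto intro: isotropic)
  have dim2: "dim ?L2 \<le> CARD('n)"
    using antisymplectic_involution_uminus[OF assms]
    by (intro isotropic_subspace_dim_le subspace_fixed_vectors) (auto intro: isotropic)
  have "s ** s = mat 1"
    using assms by (simp add: antisymplectic_involution_def)
  then have "z \<in> {x + y |x y. x \<in> ?L1 \<and> y \<in> ?L2}" for z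
    using involution_eigen_parts[of s z]
    by (intro CollectI exI[of _ "(1/2) *\<^sub>R (z + s *v z)"] exI[of _ "(1/2) *\<^sub>R (z - s *v z)"]) simp
  then have "{x + y |x y. x \<in> ?L1 \<and> y \<in> ?L2} = UNIV"
    by blast
  moreover have "?L1 \<inter> ?L2 = {0}"
    by (auto simp: matrix_vector_mult_lneg vec_eq_iff)
  ultimately have "dim (UNIV :: (real^('n + 'n)) set) = dim ?L1 + dim ?L2"
    using dim_sums_Int[OF subspace_fixed_vectors subspace_fixed_vectors, of s "- s"] by simp
  with dim1 dim2 show ?thesis by simp
qed

lemma matrix_of_linear_intertwiner:
  fixes s t :: "real^'m^'m"
  assumes "linear g" and "\<And>x. g x = 0 \<Longrightarrow> x = 0" and "\<And>x. g (s *v x) = t *v g x"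
  shows "invertible (matrix g)" and "matrix g ** s = t ** matrix g"
proof -
  have g: "matrix g *v x = g x" for x
    using assms(1) by (simp add: matrix_works)
  show "invertible (matrix g)"
    by (rule invertible_if_trivial_kernel) (simp add: g assms(2))
  show "matrix g ** s = t ** matrix g"
    by (simp add: matrix_eq g assms(3) flip: matrix_vector_mul_assoc)
qed

lemma involutions_conjugate:
  fixes s t :: "real^'m^'m"
  assumes s: "s ** s = mat 1" and t: "t ** t = mat 1"
    and dim_plus: "dim {x. s *v x = x} = dim {x. t *v x = x}"
    and dim_minus: "dim {x. (- s) *v x = x} = dim {x. (- t) *v x = x}"
  obtains h where "invertible h" and "h ** s = t ** h"
proof -
  obtain f1 where f1: "linear f1" "f1 ` {x. s *v x = x} = {x. t *v x = x}"
    "inj_on f1 {x. s *v x = x}"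
    using subspace_isomorphism[OF subspace_fixed_vectors subspace_fixed_vectors dim_plus] by blast
  obtain f2 where f2: "linear f2" "f2 ` {x. (- s) *v x = x} = {x. (- t) *v x = x}"
    "inj_on f2 {x. (- s) *v x = x}"
    using subspace_isomorphism[OF subspace_fixed_vectors subspace_fixed_vectors dim_minus] by blast
  define p1 where "p1 x = (1/2) *\<^sub>R (x + s *v x)" for x
  define p2 where "p2 x = (1/2) *\<^sub>R (x - s *v x)" for x
  have p1: "s *v p1 x = p1 x" and p2: "(- s) *v p2 x = p2 x" and p12: "p1 x + p2 x = x" for x
    unfolding p1_def p2_def using involution_eigen_parts[OF s] by blast+
  have ssx: "s *v (s *v x) = x" for x
    using s by (simp add: matrix_vector_mul_assoc)
  have p1_s: "p1 (s *v x) = p1 x" and p2_s: "p2 (s *v x) = - p2 x" for x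
    by (simp_all add: p1_def p2_def ssx add.commute flip: scaleR_minus_right)
  have t_f1: "t *v f1 (p1 x) = f1 (p1 x)" for x
    using f1(2) p1 by blast
  have t_f2: "t *v f2 (p2 x) = - f2 (p2 x)" for x
  proof -
    have "(- t) *v f2 (p2 x) = f2 (p2 x)"
      using f2(2) p2 by blast
    then show ?thesis
      by (simp add: matrix_vector_mult_lneg minus_equation_iff)
  qed
  define g where "g x = f1 (p1 x) + f2 (p2 x)" for x
  have "p1 = (*v) ((1/2) *\<^sub>R (mat 1 + s))" "p2 = (*v) ((1/2) *\<^sub>R (mat 1 - s))"
    by (simp_all add: fun_eq_iff p1_def p2_def scaleR_matrix_vector_assoc[symmetric]
        matrix_vector_mult_add_rdistrib matrix_vector_mult_diff_rdistrib)
  then have "linear (f1 \<circ> p1)" "linear (f2 \<circ> p2)"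
    using f1(1) f2(1) by (simp_all add: linear_compose)
  then have g_linear: "linear g"
    unfolding g_def using linear_compose_add by (auto simp: o_def)
  have g_s: "g (s *v x) = t *v g x" for x
    by (simp add: g_def p1_s p2_s linear_neg[OF f2(1)] matrix_vector_right_distrib t_f1 t_f2)
  have g_kernel: "x = 0" if "g x = 0" for x
  proof -
    have f12: "f1 (p1 x) = - f2 (p2 x)"
      using that by (simp add: g_def eq_neg_iff_add_eq_0)
    have "f1 (p1 x) = t *v f1 (p1 x)"
      by (simp add: t_f1)
    also have "\<dots> = - f1 (p1 x)"
      by (simp add: f12 matrix_vector_mult_rneg t_f2)
    finally have "f1 (p1 x) = 0" "f2 (p2 x) = 0"
      using f12 by (simp_all add: vec_eq_iff)
    then have "p1 x = 0" "p2 x = 0"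
      by (auto intro: inj_onD[OF f1(3)] inj_onD[OF f2(3)]
          simp: linear_0[OF f1(1)] linear_0[OF f2(1)] p1 p2)
    then show "x = 0"
      using p12[of x] by simp
  qed
  show ?thesis
    using matrix_of_linear_intertwiner[OF g_linear g_kernel g_s] that by blast
qed

lemma skew_anticommuting_with_Smat:
  fixes M :: "'n::finite rmat2"
  assumes "transpose M = - M" and "Smat ** M ** Smat = - M"
  obtains K where "M = block_mat 0 K (- transpose K) 0"
proof -
  obtain A B C D where M: "M = block_mat A B C D"
    by (metis block_mat_blocks)
  have "A = - A" "D = - D"
    using assms(2) by (simp_all add: M Smat_def block_mat_mult uminus_block_mat block_mat_eq_iff
        matrix_mul_lneg matrix_mul_rneg)
  then have "A = 0" "D = 0"
    by (simp_all add: vec_eq_iff)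
  moreover have "C = - transpose B"
    using assms(1) by (simp add: M transpose_block_mat uminus_block_mat block_mat_eq_iff)
  ultimately show ?thesis
    using that M by blast
qed

lemma invertible_block_anti_diagonal:
  fixes K L :: "real^'n::finite^'n"
  assumes "invertible (block_mat 0 K L 0)"
  shows "invertible K"
proof -
  obtain A B C D where N: "matrix_inv (block_mat 0 K L 0) = block_mat A B C D"
    by (metis block_mat_blocks)
  have "block_mat 0 K L 0 ** block_mat A B C D = block_mat (mat 1) 0 0 (mat 1)"
    using matrix_inv_right[OF assms] by (simp add: N flip: mat_eq_block_mat)
  then have "K ** C = mat 1"
    by (simp add: block_mat_mult block_mat_eq_iff)
  then show ?thesis
    using invertible_right_inverse by blast
qed

lemma Sp_intertwiner_from_invertible:
  fixes \<sigma> h1 :: "'n::finite rmat2"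
  assumes \<sigma>: "antisymplectic_involution \<sigma>"
    and "invertible h1" and h1: "h1 ** Smat = \<sigma> ** h1"
  shows "\<exists>h\<in>Sp. h ** Smat = \<sigma> ** h"
proof -
  define M where "M = transpose h1 ** Jmat ** h1"
  have "transpose M = - M"
    by (simp add: M_def matrix_transpose_mul transpose_Jmat matrix_mul_lneg matrix_mul_rneg
        matrix_mul_assoc)
  moreover have "Smat ** M ** Smat = - M"
  proof -
    have "Smat ** M ** Smat = transpose (h1 ** Smat) ** Jmat ** (h1 ** Smat)"
      by (simp add: M_def matrix_transpose_mul transpose_Smat matrix_mul_assoc)
    also have "\<dots> = transpose h1 ** (transpose \<sigma> ** Jmat ** \<sigma>) ** h1"
      by (simp add: h1 matrix_transpose_mul matrix_mul_assoc)
    finally show ?thesis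
      using \<sigma> by (simp add: antisymplectic_involution_def M_def matrix_mul_lneg matrix_mul_rneg)
  qed
  ultimately obtain K where M: "M = block_mat 0 K (- transpose K) 0"
    by (rule skew_anticommuting_with_Smat)
  have "invertible M"
    unfolding M_def using \<open>invertible h1\<close>
    by (intro invertible_mult invertible_transpose invertible_Jmat)
  then have "invertible K"
    unfolding M by (rule invertible_block_anti_diagonal)
  define g where "g = block_mat (mat 1) 0 0 (matrix_inv K)"
  define h where "h = h1 ** g"
  have "transpose h ** Jmat ** h = transpose g ** M ** g"
    by (simp add: h_def M_def matrix_transpose_mul matrix_mul_assoc)
  also have "\<dots> = block_mat 0 (K ** matrix_inv K) (- transpose (K ** matrix_inv K)) 0"
    by (simp add: g_def M block_mat_mult transpose_block_mat matrix_mul_lneg matrix_mul_rneg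
        matrix_transpose_mul)
  also have "\<dots> = Jmat"
    by (simp add: matrix_inv_right[OF \<open>invertible K\<close>] Jmat_block)
  finally have "h \<in> Sp"
    by (simp add: Sp_def)
  moreover have "g ** Smat = Smat ** g"
    by (simp add: g_def Smat_def block_mat_mult matrix_mul_lneg matrix_mul_rneg)
  then have "h ** Smat = \<sigma> ** h"
    by (metis h_def h1 matrix_mul_assoc)
  ultimately show ?thesis
    by blast
qed

lemma antisymplectic_involution_Sp_conj_Smat:
  fixes \<sigma> :: "'n::finite rmat2"
  assumes \<sigma>: "antisymplectic_involution \<sigma>"
  shows "\<exists>h\<in>Sp. h ** Smat = \<sigma> ** h"
proof -
  have S: "antisymplectic_involution (Smat :: 'n rmat2)"
    by (rule antisymplectic_involution_Smat)
  have "(Smat :: 'n rmat2) ** Smat = mat 1" "\<sigma> ** \<sigma> = mat 1"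
    using S \<sigma> by (simp_all add: antisymplectic_involution_def)
  moreover have "dim {x. (Smat :: 'n rmat2) *v x = x} = dim {x. \<sigma> *v x = x}"
    "dim {x. (- (Smat :: 'n rmat2)) *v x = x} = dim {x. (- \<sigma>) *v x = x}"
    using S \<sigma> by (simp_all add: antisymplectic_involution_fixed_dim antisymplectic_involution_uminus)
  ultimately obtain h1 :: "'n rmat2" where "invertible h1" "h1 ** Smat = \<sigma> ** h1"
    by (rule involutions_conjugate)
  then show ?thesis
    using Sp_intertwiner_from_invertible \<sigma> by blast
qed

lemma tau_cocycle_splits:
  fixes \<gamma> :: "'n::finite rmat2"
  assumes "\<gamma> \<in> Sp" and "\<gamma> ** tauM \<gamma> = mat 1"
  shows "\<exists>h\<in>Sp. \<gamma> = tauM h ** matrix_inv h"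
proof -
  obtain h where "h \<in> Sp" and h: "h ** Smat = Smat ** \<gamma> ** h"
    using antisymplectic_involution_Sp_conj_Smat[OF antisymplectic_involution_Smat_mult[OF assms]]
    by blast
  have "tauM h = Smat ** (Smat ** \<gamma> ** h)"
    by (simp add: tauM_eq_Smat_conj h flip: matrix_mul_assoc)
  also have "\<dots> = \<gamma> ** h"
    using antisymplectic_involution_Smat[where 'n = 'n]
    by (simp add: antisymplectic_involution_def matrix_mul_assoc)
  finally have "tauM h ** matrix_inv h = \<gamma>"
    using matrix_inv_right[OF Sp_invertible[OF \<open>h \<in> Sp\<close>]] by (simp flip: matrix_mul_assoc)
  with \<open>h \<in> Sp\<close> show ?thesis
    by blast
qed

section \<open>The point h(iI) of the Siegel space\<close>

definition cnj_mat :: "complex^'m^'n \<Rightarrow> complex^'m^'n" where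
  "cnj_mat X = (\<chi> i j. cnj (X$i$j))"

definition cinner :: "complex^'n \<Rightarrow> complex^'n \<Rightarrow> complex" where
  "cinner x y = (\<Sum>i\<in>UNIV. cnj (x$i) * y$i)"

definition cvec :: "real^'n \<Rightarrow> complex^'n" where
  "cvec x = (\<chi> i. complex_of_real (x$i))"

lemma cmat_mult: "cmat (A ** B) = cmat A ** cmat B"
  by (simp add: vec_eq_iff cmat_def matrix_matrix_mult_def)

lemma cmat_transpose: "cmat (transpose A) = transpose (cmat A)"
  by (simp add: vec_eq_iff cmat_def transpose_def)

lemma cmat_block_mat: "cmat (block_mat A B C D) = block_mat (cmat A) (cmat B) (cmat C) (cmat D)"
  by (simp add: vec_eq_iff cmat_def block_mat_def split: sum.split)

lemma cmat_eq_block_mat: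
  "cmat g = block_mat (cmat (blkA g)) (cmat (blkB g)) (cmat (blkC g)) (cmat (blkD g))"
  by (simp add: block_mat_blocks flip: cmat_block_mat)

lemma cmat_zero [simp]: "cmat 0 = 0"
  by (simp add: vec_eq_iff cmat_def)

lemma cmat_mat [simp]: "cmat (mat c) = mat (complex_of_real c)"
  by (simp add: vec_eq_iff cmat_def mat_def)

lemma cmat_uminus: "cmat (- A) = - cmat A"
  by (simp add: vec_eq_iff cmat_def)

lemma cmat_Jmat: "cmat Jmat = block_mat 0 (mat 1) (- mat 1) 0"
  by (simp add: Jmat_block cmat_block_mat cmat_uminus)

lemma cmat_Smat: "cmat Smat = block_mat (mat 1) 0 0 (- mat 1)"
  by (simp add: Smat_def cmat_block_mat cmat_uminus)

lemma cnj_mat_mult: "cnj_mat (A ** B) = cnj_mat A ** cnj_mat B"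
  by (simp add: vec_eq_iff cnj_mat_def matrix_matrix_mult_def)

lemma cnj_mat_cmat [simp]: "cnj_mat (cmat A) = cmat A"
  by (simp add: vec_eq_iff cnj_mat_def cmat_def)

lemma cnj_mat_mat: "cnj_mat (mat c) = mat (cnj c)"
  by (simp add: vec_eq_iff cnj_mat_def mat_def)

lemma cnj_mat_vstack: "cnj_mat (vstack T U) = vstack (cnj_mat T) (cnj_mat U)"
  by (simp add: vec_eq_iff cnj_mat_def vstack_def split: sum.split)

lemma invertible_cnj_mat:
  fixes A :: "complex^'n^'n"
  assumes "invertible A"
  shows "invertible (cnj_mat A)"
proof -
  have "cnj_mat A ** cnj_mat (matrix_inv A) = mat 1"
    by (simp add: matrix_inv_right[OF assms] cnj_mat_mat flip: cnj_mat_mult)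
  then show ?thesis
    using invertible_right_inverse by blast
qed

lemma tauZ_eq_uminus_cnj_mat: "tauZ Z = - cnj_mat Z"
  by (simp add: vec_eq_iff tauZ_def cnj_mat_def)

lemma cinner_adjoint:
  "cinner x ((transpose (cnj_mat A) ** B) *v y) = cinner (A *v x) (B *v y)"
proof -
  have "cinner x ((transpose (cnj_mat A) ** B) *v y)
      = (\<Sum>i\<in>UNIV. \<Sum>j\<in>UNIV. \<Sum>k\<in>UNIV. cnj (x$i) * (cnj (A$k$i) * (B$k$j * y$j)))"
    by (simp add: cinner_def matrix_vector_mult_def matrix_matrix_mult_def transpose_def
        cnj_mat_def sum_distrib_left sum_distrib_right mult.assoc)
  also have "\<dots> = (\<Sum>k\<in>UNIV. \<Sum>i\<in>UNIV. \<Sum>j\<in>UNIV. cnj (x$i) * (cnj (A$k$i) * (B$k$j * y$j)))"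
    by (subst sum.swap) (rule sum.cong[OF refl], rule sum.swap)
  also have "\<dots> = cinner (A *v x) (B *v y)"
    by (simp add: cinner_def matrix_vector_mult_def sum_distrib_left sum_distrib_right mult_ac)
  finally show ?thesis .
qed

lemma cinner_commute: "cinner y x = cnj (cinner x y)"
  by (simp add: cinner_def cnj_sum mult.commute)

lemma cinner_diff_right: "cinner x (y - z) = cinner x y - cinner x z"
  by (simp add: cinner_def right_diff_distrib sum_subtractf)

lemma cinner_mat_right: "cinner x (mat c *v y) = c * cinner x y"
proof -
  have "(if i = j then c else 0) * y$j = (if i = j then c * y$j else 0)" for i j
    by simp
  then have "mat c *v y = (\<chi> i. c * y$i)"
    by (simp add: vec_eq_iff matrix_vector_mult_def mat_def)
  then show ?thesis
    by (simp add: cinner_def sum_distrib_left mult_ac)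
qed

lemma cinner_self: "cinner y y = complex_of_real ((norm y)^2)"
proof -
  have "(norm y)^2 = (\<Sum>i\<in>UNIV. (cmod (y$i))^2)"
    by (simp add: norm_vec_def L2_set_def sum_nonneg)
  then show ?thesis
    by (simp add: cinner_def complex_norm_square mult.commute del: of_real_power)
qed

lemma inner_ImM_eq_Im_cinner: "x \<bullet> (ImM Z *v x) = Im (cinner (cvec x) (Z *v cvec x))"
  by (simp add: inner_vec_def matrix_vector_mult_def ImM_def cvec_def cinner_def
      sum_distrib_left mult_ac)

lemma act_mult_eq_of_vstack:
  assumes "cmat g ** vstack Z (mat 1) ** Q = vstack P Q'" and "invertible Q'"
  shows "act g Z ** Q' = P"
proof -
  define M where "M = cmat (blkA g) ** Z + cmat (blkB g)"
  define N where "N = cmat (blkC g) ** Z + cmat (blkD g)"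
  have "cmat g ** vstack Z (mat 1) = vstack M N"
    by (subst cmat_eq_block_mat) (simp add: M_def N_def block_mat_mult_vstack)
  then have MQ: "M ** Q = P" and NQ: "N ** Q = Q'"
    using assms(1) by (simp_all add: vstack_mult vstack_eq_iff)
  have "N ** (Q ** matrix_inv Q') = mat 1"
    by (simp add: matrix_mul_assoc NQ matrix_inv_right[OF assms(2)])
  then have "invertible N"
    using invertible_right_inverse by blast
  have "act g Z ** Q' = M ** (matrix_inv N ** N) ** Q"
    by (simp add: act_def M_def N_def NQ[symmetric] matrix_mul_assoc)
  then show ?thesis
    by (simp add: matrix_inv_left[OF \<open>invertible N\<close>] MQ)
qed

lemma transpose_vstack_Jmat_vstack:
  "transpose (vstack T U) ** cmat Jmat ** vstack T' U' = transpose T ** U' - transpose U ** T'"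
  by (simp add: cmat_Jmat block_mat_mult_vstack transpose_vstack_mult_vstack matrix_mul_lneg
      matrix_mul_rneg flip: matrix_mul_assoc)

lemma Sp_preserves_cmat_form:
  assumes "h \<in> Sp"
  shows "transpose (cmat h ** X) ** cmat Jmat ** (cmat h ** Y) = transpose X ** cmat Jmat ** Y"
proof -
  have "transpose (cmat h ** X) ** cmat Jmat ** (cmat h ** Y)
      = transpose X ** (transpose (cmat h) ** cmat Jmat ** cmat h) ** Y"
    by (simp add: matrix_transpose_mul matrix_mul_assoc)
  also have "transpose (cmat h) ** cmat Jmat ** cmat h = cmat Jmat"
    using assms by (simp add: Sp_def flip: cmat_transpose cmat_mult)
  finally show ?thesis .
qed

lemma Sp_columns_relations:
  fixes h :: "'n::finite rmat2"
  assumes "h \<in> Sp" and PQ: "cmat h ** vstack (mat \<i>) (mat 1) = vstack P Q"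
  shows "transpose P ** Q = transpose Q ** P"
    and "transpose (cnj_mat Q) ** P - transpose (cnj_mat P) ** Q = mat (2 * \<i>)"
proof -
  let ?W = "vstack (mat \<i>) (mat 1) :: complex^'n^('n + 'n)"
  have "transpose P ** Q - transpose Q ** P = transpose ?W ** cmat Jmat ** ?W"
    using Sp_preserves_cmat_form[OF assms(1), of ?W ?W] by (simp add: PQ transpose_vstack_Jmat_vstack)
  also have "\<dots> = 0"
    by (simp add: transpose_vstack_Jmat_vstack)
  finally show "transpose P ** Q = transpose Q ** P"
    by simp
  have "cmat h ** cnj_mat ?W = vstack (cnj_mat P) (cnj_mat Q)"
    using arg_cong[OF PQ, of cnj_mat] by (simp add: cnj_mat_mult cnj_mat_vstack)
  then have "transpose (cnj_mat P) ** Q - transpose (cnj_mat Q) ** P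
      = transpose (cnj_mat ?W) ** cmat Jmat ** ?W"
    using Sp_preserves_cmat_form[OF assms(1), of "cnj_mat ?W" ?W]
    by (simp add: PQ transpose_vstack_Jmat_vstack)
  also have "\<dots> = mat (- 2 * \<i>)"
    by (simp add: cnj_mat_vstack cnj_mat_mat transpose_vstack_Jmat_vstack mat_diff)
  finally have "- (transpose (cnj_mat P) ** Q - transpose (cnj_mat Q) ** P) = - mat (- 2 * \<i>)"
    by simp
  then show "transpose (cnj_mat Q) ** P - transpose (cnj_mat P) ** Q = mat (2 * \<i>)"
    by (simp flip: mat_uminus)
qed

lemma Sp_columns_Im_cinner:
  fixes h :: "'n::finite rmat2"
  assumes "h \<in> Sp" and "cmat h ** vstack (mat \<i>) (mat 1) = vstack P Q"
  shows "Im (cinner (Q *v y) (P *v y)) = (norm y)^2"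
proof -
  let ?a = "cinner (Q *v y) (P *v y)"
  have "?a - cnj ?a = cinner y ((transpose (cnj_mat Q) ** P - transpose (cnj_mat P) ** Q) *v y)"
    by (simp add: matrix_vector_mult_diff_rdistrib cinner_diff_right cinner_adjoint
        cinner_commute[of "P *v y"])
  also have "\<dots> = 2 * \<i> * complex_of_real ((norm y)^2)"
    by (simp add: Sp_columns_relations(2)[OF assms] cinner_mat_right cinner_self)
  finally have "Im (?a - cnj ?a) = 2 * (norm y)^2"
    by simp
  then show ?thesis
    by simp
qed

lemma Sp_columns_lower_invertible:
  fixes h :: "'n::finite rmat2"
  assumes "h \<in> Sp" and "cmat h ** vstack (mat \<i>) (mat 1) = vstack P Q"
  shows "invertible Q"
proof (rule invertible_if_trivial_kernel)
  fix y
  assume "Q *v y = 0"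
  then have "(norm y)^2 = 0"
    using Sp_columns_Im_cinner[OF assms, of y] by (simp add: cinner_def)
  then show "y = 0"
    by simp
qed

lemma Sp_columns_ratio_in_siegel:
  fixes h :: "'n::finite rmat2"
  assumes "h \<in> Sp" and "cmat h ** vstack (mat \<i>) (mat 1) = vstack P Q"
  shows "P ** matrix_inv Q \<in> siegel"
proof -
  define Z where "Z = P ** matrix_inv Q"
  have Q: "invertible Q"
    by (rule Sp_columns_lower_invertible[OF assms])
  have ZQ: "Z ** Q = P"
    by (simp add: Z_def matrix_inv_left[OF Q] flip: matrix_mul_assoc)
  have "transpose Q ** (transpose Z ** Q) = transpose Q ** (Z ** Q)"
    by (simp add: matrix_mul_assoc Sp_columns_relations(1)[OF assms] ZQ
        flip: matrix_transpose_mul)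
  then have "transpose Z = Z"
    by (simp add: matrix_mul_left_cancel[OF invertible_transpose[OF Q]]
        matrix_mul_right_cancel[OF Q])
  moreover have "pos_def (ImM Z)"
    unfolding pos_def_def
  proof (intro allI impI)
    fix x :: "real^'n"
    assume "x \<noteq> 0"
    define y where "y = matrix_inv Q *v cvec x"
    have Qy: "Q *v y = cvec x"
      by (simp add: y_def matrix_vector_mul_assoc matrix_inv_right[OF Q])
    have "y \<noteq> 0"
    proof
      assume "y = 0"
      then have "cvec x = 0"
        using Qy by simp
      then show False
        using \<open>x \<noteq> 0\<close> by (simp add: cvec_def vec_eq_iff)
    qed
    have "x \<bullet> (ImM Z *v x) = Im (cinner (Q *v y) (P *v y))"
      by (simp add: inner_ImM_eq_Im_cinner Qy[symmetric] matrix_vector_mul_assoc ZQ)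
    also have "\<dots> = (norm y)^2"
      by (rule Sp_columns_Im_cinner[OF assms])
    finally show "x \<bullet> (ImM Z *v x) > 0"
      using \<open>y \<noteq> 0\<close> by simp
  qed
  ultimately show ?thesis
    by (simp add: siegel_def Z_def)
qed

lemma Sp_columns_ratio_tau_fixed:
  fixes \<gamma> h :: "'n::finite rmat2"
  assumes "h \<in> Sp" and PQ: "cmat h ** vstack (mat \<i>) (mat 1) = vstack P Q"
    and \<gamma>: "\<gamma> ** h = tauM h"
  shows "act \<gamma> (P ** matrix_inv Q) = tauZ (P ** matrix_inv Q)"
proof -
  let ?W = "vstack (mat \<i>) (mat 1) :: complex^'n^('n + 'n)"
  define Z where "Z = P ** matrix_inv Q"
  have Q: "invertible Q"
    by (rule Sp_columns_lower_invertible[OF assms(1,2)])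
  have ZQ: "Z ** Q = P"
    by (simp add: Z_def matrix_inv_left[OF Q] flip: matrix_mul_assoc)
  \<comment> \<open>the matrix form of \<open>\<tau>(iI) = iI\<close>\<close>
  have SW: "cmat Smat ** ?W = - cnj_mat ?W"
    by (simp add: cmat_Smat block_mat_mult_vstack cnj_mat_vstack cnj_mat_mat uminus_vstack
        mat_uminus matrix_mul_lneg)
  have "vstack Z (mat 1) ** Q = cmat h ** ?W"
    by (simp add: vstack_mult ZQ PQ)
  then have "cmat \<gamma> ** vstack Z (mat 1) ** Q = cmat (\<gamma> ** h) ** ?W"
    by (simp add: cmat_mult flip: matrix_mul_assoc)
  also have "\<dots> = cmat Smat ** cmat h ** (cmat Smat ** ?W)"
    by (simp add: \<gamma> tauM_eq_Smat_conj cmat_mult matrix_mul_assoc)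
  also have "\<dots> = - (cmat Smat ** cnj_mat (cmat h ** ?W))"
    by (simp add: SW cnj_mat_mult matrix_mul_rneg matrix_mul_assoc)
  also have "\<dots> = vstack (- cnj_mat P) (cnj_mat Q)"
    by (simp add: PQ cnj_mat_vstack cmat_Smat block_mat_mult_vstack uminus_vstack matrix_mul_lneg)
  finally have "act \<gamma> Z ** cnj_mat Q = - cnj_mat P"
    using invertible_cnj_mat[OF Q] by (rule act_mult_eq_of_vstack)
  moreover have "tauZ Z ** cnj_mat Q = - cnj_mat P"
    by (simp add: tauZ_eq_uminus_cnj_mat matrix_mul_lneg ZQ flip: cnj_mat_mult)
  ultimately show ?thesis
    unfolding Z_def[symmetric]
    using matrix_mul_right_cancel[OF invertible_cnj_mat[OF Q]] by metis
qed

lemma siegel_fix_nonempty_if_tau_split: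
  fixes \<gamma> h :: "'n::finite rmat2"
  assumes "h \<in> Sp" and "\<gamma> = tauM h ** matrix_inv h"
  shows "siegel_fix \<gamma> \<noteq> {}"
proof -
  obtain P Q where PQ: "cmat h ** vstack (mat \<i>) (mat 1) = vstack P Q"
    using vstack_cases by blast
  have "\<gamma> ** h = tauM h"
    using assms matrix_inv_left[OF Sp_invertible[OF assms(1)]] by (simp flip: matrix_mul_assoc)
  then have "P ** matrix_inv Q \<in> siegel_fix \<gamma>"
    using Sp_columns_ratio_in_siegel[OF assms(1) PQ] Sp_columns_ratio_tau_fixed[OF assms(1) PQ]
    by (simp add: siegel_fix_def)
  then show ?thesis
    by blast
qed

theorem lemma3p5:
  fixes \<gamma> :: "'n::finite rmat2"
  assumes "\<gamma> \<in> Sp"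
    and "\<gamma> ** tauM \<gamma> = mat 1"
  shows "(\<exists>h \<in> Sp. \<gamma> = tauM h ** matrix_inv h) \<longleftrightarrow> siegel_fix \<gamma> \<noteq> {}"
proof -
  obtain h where "h \<in> Sp" and "\<gamma> = tauM h ** matrix_inv h"
    using tau_cocycle_splits[OF assms] by blast
  then show ?thesis
    using siegel_fix_nonempty_if_tau_split by blast
qed

end
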